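(* Let $X_1,\dots,X_n$ be i.i.d. real random variables whose common distribution is symmetric about $\mu\in\mathbb{R}$ and satisfies $\mathbb{E}\big[|X_1-\mathbb{E}X_1|^{1+a}\big]=M<\infty$ for some $a\in(0,1]$. Take $m=2$, let $k\le n$ be an integer, $\tilde n=\lfloor n/k\rfloor$, let $R(\theta)$ be the one-sided resampled median-of-means rank defined in the context, and $U=\sup\{\theta: R(\theta)=1\}$. Then $$\mathbb{P}\Big(U-\mu>4(12M)^{1/(1+a)}\Big(\frac{1}{\tilde n}\Big)^{\frac{a}{1+a}}\Big)\le 2k\exp(-\tilde n/8)+2\exp(-k/8).$$
   Context: Blocks: for $\ell=1,\dots,k$ let $B_\ell=\{i\in[n]: i\equiv \ell \pmod k\}$. Median: for reals $y_1,\dots,y_k$ with order statistics $y_{(1)}\le\dots\le y_{(k)}$, $\mathrm{med}(y_1,\dots,y_k)=y_{(k/2)}$ if $k$ is even and $y_{(\lfloor k/2\rfloor+1)}$ if $k$ is odd. Median-of-means: $\widehat\mu(x_1,\dots,x_n)=\mathrm{med}\big(\frac{1}{|B_1|}\sum_{i\in B_1}x_i,\dots,\frac{1}{|B_k|}\sum_{i\in B_k}x_i\big)$. Randomization: $\alpha_{1,1},\dots,\alpha_{n,1}$ i.i.d. Rademacher signs independent of the data; $\pi$ a uniformly random permutation of $\{0,1\}$ independent of data and signs. For $\theta\in\mathbb{R}$: $\mathcal{D}_0(\theta)=(X_1,\dots,X_n)$, $\mathcal{D}_1(\theta)=(\alpha_{1,1}(X_1-\theta)+\theta,\dots,\alpha_{n,1}(X_n-\theta)+\theta)$;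 $S_j(\theta)=\widehat\mu(\mathcal{D}_j(\theta))-\theta$ for $j=0,1$. $S_0(\theta)\prec_\pi S_1(\theta)$ iff $S_0(\theta)<S_1(\theta)$, or $S_0(\theta)=S_1(\theta)$ and $\pi(0)<\pi(1)$. $R(\theta)=1+\mathbb{I}\big(S_0(\theta)\prec_\pi S_1(\theta)\big)$. The supremum of the empty set is $-\infty$. *)

theory Defs
  imports "HOL-Probability.Probability"
begin

text \<open>Median of y_1..y_k: the (k/2)-th order statistic for even k,
  the (floor(k/2)+1)-th for odd k (1-based), here 0-based list indices.\<close>
definition med :: "nat \<Rightarrow> (nat \<Rightarrow> real) \<Rightarrow> real" where
  "med k y = (let ys = sort (map y [1..<k+1]) in
                if even k then ys ! (k div 2 - 1) else ys ! (k div 2))"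

definition block :: "nat \<Rightarrow> nat \<Rightarrow> nat \<Rightarrow> nat set" where
  "block n k l = {i \<in> {1..n}. i mod k = l mod k}"

definition mom :: "nat \<Rightarrow> nat \<Rightarrow> (nat \<Rightarrow> real) \<Rightarrow> real" where
  "mom n k x = med k (\<lambda>l. (\<Sum>i\<in>block n k l. x i) / real (card (block n k l)))"

text \<open>Rank R(theta) for data x, signs s, and tie-break bit p, where p means pi(0) < pi(1).\<close>
definition rmom_rank :: "nat \<Rightarrow> nat \<Rightarrow> (nat \<Rightarrow> real) \<Rightarrow> (nat \<Rightarrow> real) \<Rightarrow> bool \<Rightarrow> real \<Rightarrow> nat" where
  "rmom_rank n k x s p \<theta> =
     (let S0 = mom n k x - \<theta>;
          S1 = mom n k (\<lambda>i. s i * (x i - \<theta>) + \<theta>) - \<theta>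
      in 1 + (if S0 < S1 \<or> (S0 = S1 \<and> p) then 1 else 0))"

text \<open>U = sup {theta : R(theta) = 1}, in the extended reals (sup of empty set = -infinity).\<close>
definition rmom_U :: "nat \<Rightarrow> nat \<Rightarrow> (nat \<Rightarrow> real) \<Rightarrow> (nat \<Rightarrow> real) \<Rightarrow> bool \<Rightarrow> ereal" where
  "rmom_U n k x s p = Sup (ereal ` {\<theta>. rmom_rank n k x s p \<theta> = 1})"

text \<open>Outer probability of a (possibly non-measurable) event; equals its probability when measurable.\<close>
definition outer_prob :: "'a measure \<Rightarrow> 'a set \<Rightarrow> real" where
  "outer_prob M E = Inf (measure M ` {A \<in> sets M. E \<inter> space M \<subseteq> A})"

end

theory Submission
  imports Defs
begin

(*
  Let n' = n div k and r = (12 M)^(1/(1+a)) (1/n')^(a/(1+a)).  Call a block B high if the sum of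
  X_i - mu over B exceeds |B| r, low if the sum of alpha_i (X_i - mu) over B is below -|B| r, and
  unbalanced if its signs sum to at least |B|/2.  If fewer than half of the blocks are high, fewer
  than half are low and no block is unbalanced, then U <= mu + 4 r: the median of means of the
  data is at most mu + r, while for theta > mu + 4 r every block that is not low has, after the
  data are reflected about theta, a mean above mu + r, so that R(theta) = 2.

  A block is high, or low, with probability at most 1/6: truncate the summands at |B| r, bound
  the event that some summand exceeds this level by Markov's inequality for the (1+a)-th moment,
  and the truncated sum by Chebyshev's inequality, its summands being centred by the symmetry of
  X_i - mu and of the signs.  As the blocks are independent, Hoeffding's inequality bounds the
  probability that half of them are high (or low) by exp(-k/8); applied to the signs within a
  block it bounds the probability that the block is unbalanced by exp(-n'/8).
*)

section \<open>Medians of block means\<close>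

lemma length_filter_sort_map_upt:
  fixes v :: "nat \<Rightarrow> real"
  shows "length (filter P (sort (map v [1..<k+1]))) = card {l\<in>{1..k}. P (v l)}"
proof -
  have "length (filter P (sort (map v [1..<k+1]))) = length (filter (P \<circ> v) [1..<k+1])"
    by (metis filter_map filter_sort length_map length_sort)
  also have "\<dots> = card {l\<in>{1..k}. P (v l)}"
    by (subst distinct_card[symmetric]) (auto intro!: arg_cong[where f=card])
  finally show ?thesis .
qed

lemma med_le_if_minority_above:
  fixes v :: "nat \<Rightarrow> real"
  assumes "1 \<le> k" and minority: "2 * card {l\<in>{1..k}. t < v l} < k"
  shows "med k v \<le> t"
proof (rule ccontr)
  define ys where "ys = sort (map v [1..<k+1])"
  define j where "j = (if even k then k div 2 - 1 else k div 2)"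
  have med: "med k v = ys ! j" and len: "length ys = k"
    unfolding med_def ys_def j_def by (auto simp: Let_def)
  assume "\<not> med k v \<le> t"
  then have "\<forall>i\<in>{j..<k}. t < ys ! i"
    using sorted_nth_mono[of ys j] len med unfolding ys_def by fastforce
  then have "card {j..<k} \<le> card {i. i < length ys \<and> t < ys ! i}"
    using len by (intro card_mono) auto
  also have "\<dots> = card {l\<in>{1..k}. t < v l}"
    unfolding ys_def length_filter_conv_card[symmetric] by (rule length_filter_sort_map_upt)
  finally show False
    using minority \<open>1 \<le> k\<close> unfolding j_def by (auto split: if_splits)
qed

lemma less_med_if_majority_above:
  fixes v :: "nat \<Rightarrow> real"
  assumes "1 \<le> k" and majority: "k < 2 * card {l\<in>{1..k}. t < v l}"
  shows "t < med k v"
proof (rule ccontr)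
  define ys where "ys = sort (map v [1..<k+1])"
  define j where "j = (if even k then k div 2 - 1 else k div 2)"
  have med: "med k v = ys ! j" and len: "length ys = k"
    unfolding med_def ys_def j_def by (auto simp: Let_def)
  have "j < k" using \<open>1 \<le> k\<close> unfolding j_def by auto
  assume "\<not> t < med k v"
  then have "{i. i < length ys \<and> t < ys ! i} \<subseteq> {j+1..<k}"
    using sorted_nth_mono[of ys _ j] len med \<open>j < k\<close> unfolding ys_def
    by (force simp: not_less_eq_eq[symmetric])
  then have "card {i. i < length ys \<and> t < ys ! i} \<le> card {j+1..<k}"
    by (intro card_mono) auto
  moreover have "card {i. i < length ys \<and> t < ys ! i} = card {l\<in>{1..k}. t < v l}"
    unfolding ys_def length_filter_conv_card[symmetric] by (rule length_filter_sort_map_upt)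
  ultimately show False
    using majority \<open>1 \<le> k\<close> unfolding j_def by (auto split: if_splits)
qed

lemma block_subset: "block n k l \<subseteq> {1..n}"
  and finite_block: "finite (block n k l)"
  unfolding block_def by auto

lemma disjoint_family_on_block: "disjoint_family_on (block n k) {1..k}"
  unfolding disjoint_family_on_def
proof (intro ballI impI)
  fix l l' assume "l \<in> {1..k}" "l' \<in> {1..k}" "l \<noteq> l'"
  moreover have "m mod k = (if m = k then 0 else m)" if "m \<in> {1..k}" for m
    using that by auto
  ultimately have "l mod k \<noteq> l' mod k" by auto
  then show "block n k l \<inter> block n k l' = {}" unfolding block_def by auto
qed

lemma card_block_ge:
  assumes "l \<in> {1..k}"
  shows "n div k \<le> card (block n k l)"
proof -
  have "(\<lambda>j. l + j * k) ` {0..<n div k} \<subseteq> block n k l"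
  proof
    fix x assume "x \<in> (\<lambda>j. l + j * k) ` {0..<n div k}"
    then obtain j where j: "j < n div k" "x = l + j * k" by auto
    have "l + j * k \<le> (j + 1) * k" using assms by simp
    also have "\<dots> \<le> n div k * k" using j by (intro mult_right_mono) auto
    also have "\<dots> \<le> n" by simp
    finally show "x \<in> block n k l" using j assms unfolding block_def by auto
  qed
  moreover have "inj_on (\<lambda>j. l + j * k) {0..<n div k}" using assms by (auto simp: inj_on_def)
  ultimately show ?thesis
    by (metis card_atLeastLessThan card_image card_mono finite_block minus_nat.diff_0)
qed

lemma card_block_pos:
  assumes "1 \<le> k" "k \<le> n" "l \<in> {1..k}"
  shows "0 < card (block n k l)"
proof -
  have "0 < n div k" using assms by (simp add: div_greater_zero_iff)
  then show ?thesis using card_block_ge[OF assms(3), of n] by linarith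
qed

section \<open>The deterministic bound\<close>

lemma mean_gt_iff_sum_deviation_gt:
  fixes x :: "'i \<Rightarrow> real" and \<mu> s :: real
  assumes "0 < card B"
  shows "\<mu> + s < (\<Sum>i\<in>B. x i) / card B \<longleftrightarrow> card B * s < (\<Sum>i\<in>B. x i - \<mu>)"
  using assms by (simp add: sum_subtractf pos_less_divide_eq algebra_simps)

lemma reflected_mean_gt:
  fixes x \<alpha> :: "'i \<Rightarrow> real" and \<mu> s \<theta> :: real
  assumes "0 < card B" "0 \<le> s"
    and signs: "(\<Sum>i\<in>B. \<alpha> i) < card B / 2"
    and far: "\<mu> + 4 * s < \<theta>"
    and dev: "- (card B * s) \<le> (\<Sum>i\<in>B. \<alpha> i * (x i - \<mu>))"
  shows "\<mu> + s < (\<Sum>i\<in>B. \<alpha> i * (x i - \<theta>) + \<theta>) / card B"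
proof -
  have "(\<Sum>i\<in>B. \<alpha> i * (x i - \<theta>) + \<theta> - \<mu>)
      = (\<Sum>i\<in>B. \<alpha> i * (x i - \<mu>)) + (\<theta> - \<mu>) * (card B - (\<Sum>i\<in>B. \<alpha> i))"
    by (simp add: sum.distrib sum_subtractf sum_distrib_left algebra_simps)
  moreover have "4 * s * (card B / 2) \<le> 4 * s * (card B - (\<Sum>i\<in>B. \<alpha> i))"
    using signs \<open>0 \<le> s\<close> by (intro mult_left_mono) auto
  moreover have "\<dots> < (\<theta> - \<mu>) * (card B - (\<Sum>i\<in>B. \<alpha> i))"
    using signs far \<open>0 < card B\<close> by (intro mult_strict_right_mono) auto
  moreover have "4 * s * (card B / 2) = 2 * (card B * s)" by simp
  ultimately have "card B * s < (\<Sum>i\<in>B. \<alpha> i * (x i - \<theta>) + \<theta> - \<mu>)"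
    using dev by linarith
  then show ?thesis
    using mean_gt_iff_sum_deviation_gt[OF \<open>0 < card B\<close>] by blast
qed

lemma rmom_U_le:
  fixes x \<alpha> :: "nat \<Rightarrow> real" and \<mu> s :: real
  assumes k: "1 \<le> k" "k \<le> n" and "0 \<le> s"
    and few_high: "2 * card {l\<in>{1..k}. card (block n k l) * s < (\<Sum>i\<in>block n k l. x i - \<mu>)} < k"
    and few_low: "2 * card {l\<in>{1..k}. (\<Sum>i\<in>block n k l. \<alpha> i * (x i - \<mu>)) < - (card (block n k l) * s)} < k"
    and signs: "\<forall>l\<in>{1..k}. (\<Sum>i\<in>block n k l. \<alpha> i) < card (block n k l) / 2"
  shows "rmom_U n k x \<alpha> p \<le> ereal (\<mu> + 4 * s)"
  unfolding rmom_U_def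
proof (rule Sup_least, clarify)
  have pos: "0 < card (block n k l)" if "l \<in> {1..k}" for l
    using card_block_pos[OF k that] .
  have "mom n k x \<le> \<mu> + s"
    unfolding mom_def using k(1) few_high
    by (intro med_le_if_minority_above)
       (simp_all add: mean_gt_iff_sum_deviation_gt[OF pos] cong: conj_cong)
  fix \<theta> assume rank: "rmom_rank n k x \<alpha> p \<theta> = 1"
  define w where "w i = \<alpha> i * (x i - \<theta>) + \<theta>" for i
  have "mom n k w \<le> mom n k x"
    using rank unfolding rmom_rank_def Let_def w_def by (auto split: if_splits)
  show "ereal \<theta> \<le> ereal (\<mu> + 4 * s)"
  proof (rule ccontr)
    assume "\<not> ereal \<theta> \<le> ereal (\<mu> + 4 * s)"
    then have far: "\<mu> + 4 * s < \<theta>" by simp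
    let ?low = "\<lambda>l. (\<Sum>i\<in>block n k l. \<alpha> i * (x i - \<mu>)) < - (card (block n k l) * s)"
    let ?high = "\<lambda>l. \<mu> + s < (\<Sum>i\<in>block n k l. w i) / card (block n k l)"
    have "{l\<in>{1..k}. \<not> ?low l} \<subseteq> {l\<in>{1..k}. ?high l}"
      using reflected_mean_gt[OF pos \<open>0 \<le> s\<close> _ far] signs unfolding w_def by (auto simp: not_less)
    moreover have "card {l\<in>{1..k}. \<not> ?low l} + card {l\<in>{1..k}. ?low l}
        = card ({l\<in>{1..k}. \<not> ?low l} \<union> {l\<in>{1..k}. ?low l})"
      by (rule card_Un_disjoint[symmetric]) auto
    moreover have "{l\<in>{1..k}. \<not> ?low l} \<union> {l\<in>{1..k}. ?low l} = {1..k}" by blast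
    ultimately have "k < 2 * card {l\<in>{1..k}. ?high l}"
      using few_low card_mono[of "{l\<in>{1..k}. ?high l}" "{l\<in>{1..k}. \<not> ?low l}"] by simp
    then have "\<mu> + s < mom n k w"
      unfolding mom_def by (rule less_med_if_majority_above[OF k(1)])
    then show False using \<open>mom n k w \<le> mom n k x\<close> \<open>mom n k x \<le> \<mu> + s\<close> by linarith
  qed
qed

section \<open>Tail bounds for sums of independent variables\<close>

lemma outer_prob_le_measure:
  assumes "A \<in> sets M" "E \<inter> space M \<subseteq> A"
  shows "outer_prob M E \<le> measure M A"
  unfolding outer_prob_def
  by (rule cInf_lower) (use assms in \<open>auto intro: bdd_belowI[of _ 0]\<close>)

lemma integral_cong_distr:
  fixes f :: "'b \<Rightarrow> real"
  assumes "distr M N X = distr M N Y" "X \<in> M \<rightarrow>\<^sub>M N" "Y \<in> M \<rightarrow>\<^sub>M N" "f \<in> borel_measurable N"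
  shows "(\<integral>\<omega>. f (X \<omega>) \<partial>M) = (\<integral>\<omega>. f (Y \<omega>) \<partial>M)"
  using assms by (metis integral_distr)

lemma integrable_cong_distr:
  fixes f :: "'b \<Rightarrow> real"
  assumes "distr M N X = distr M N Y" "X \<in> M \<rightarrow>\<^sub>M N" "Y \<in> M \<rightarrow>\<^sub>M N" "f \<in> borel_measurable N"
  shows "integrable M (\<lambda>\<omega>. f (X \<omega>)) \<longleftrightarrow> integrable M (\<lambda>\<omega>. f (Y \<omega>))"
  using assms by (metis integrable_distr_eq)

lemma sets_Collect_card_ge:
  assumes "finite I" "\<And>l. l \<in> I \<Longrightarrow> {\<omega>\<in>space M. P l \<omega>} \<in> sets M"
  shows "{\<omega>\<in>space M. c \<le> m * card {l\<in>I. P l \<omega>}} \<in> sets M"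
proof -
  have "c \<le> m * card {l\<in>I. P l \<omega>} \<longleftrightarrow> real c \<le> real m * (\<Sum>l\<in>I. of_bool (P l \<omega>))" for \<omega>
  proof -
    have card: "real (card {l\<in>I. P l \<omega>}) = (\<Sum>l\<in>I. of_bool (P l \<omega>))"
      using \<open>finite I\<close> by (simp add: Int_def conj_commute)
    show ?thesis
      unfolding card[symmetric] by (simp only: of_nat_mult[symmetric] of_nat_le_iff)
  qed
  then have "{\<omega>\<in>space M. c \<le> m * card {l\<in>I. P l \<omega>}}
      = {\<omega>\<in>space M. real c \<le> real m * (\<Sum>l\<in>I. of_bool (P l \<omega>))}"
    by simp
  also have "\<dots> \<in> sets M"
    using assms by measurable
  finally show ?thesis .
qed

definition truncate_at :: "real \<Rightarrow> real \<Rightarrow> real" where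
  "truncate_at L v = (if \<bar>v\<bar> \<le> L then v else 0)"

lemma borel_measurable_truncate_at [measurable]: "truncate_at L \<in> borel_measurable borel"
  unfolding truncate_at_def by measurable

lemma abs_truncate_at_le: "0 \<le> L \<Longrightarrow> \<bar>truncate_at L v\<bar> \<le> L"
  unfolding truncate_at_def by auto

lemma (in finite_measure) integrable_truncate_at:
  "f \<in> borel_measurable M \<Longrightarrow> integrable M (\<lambda>\<omega>. truncate_at L (f \<omega>))"
  by (rule integrable_const_bound[where B="\<bar>L\<bar>"]) (auto simp: truncate_at_def)

lemma truncate_at_uminus: "truncate_at L (- v) = - truncate_at L v"
  unfolding truncate_at_def by auto

lemma truncate_at_square_le:
  assumes "0 \<le> L" "a \<le> 1"
  shows "(truncate_at L v)\<^sup>2 \<le> \<bar>v\<bar> powr (1 + a) * L powr (1 - a)"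
proof (cases "\<bar>v\<bar> \<le> L")
  case True
  have "(truncate_at L v)\<^sup>2 = \<bar>v\<bar> powr (1 + a) * \<bar>v\<bar> powr (1 - a)"
    using True by (cases "v = 0") (simp_all add: truncate_at_def powr_add[symmetric] powr_numeral)
  also have "\<dots> \<le> \<bar>v\<bar> powr (1 + a) * L powr (1 - a)"
    using True assms by (intro mult_left_mono powr_mono2) auto
  finally show ?thesis .
qed (simp add: truncate_at_def)

lemma truncate_at_sign_mult: "s = 1 \<or> s = -1 \<Longrightarrow> truncate_at L (s * v) = s * truncate_at L v"
  by (auto simp: truncate_at_uminus)

lemma (in prob_space) prob_abs_gt_le_moment:
  assumes "W \<in> borel_measurable M" "integrable M (\<lambda>\<omega>. \<bar>W \<omega>\<bar> powr q)" "0 < q" "0 < L"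
  shows "prob {\<omega>\<in>space M. L < \<bar>W \<omega>\<bar>} \<le> expectation (\<lambda>\<omega>. \<bar>W \<omega>\<bar> powr q) / L powr q"
proof -
  have "prob {\<omega>\<in>space M. L < \<bar>W \<omega>\<bar>} \<le> prob {\<omega>\<in>space M. L powr q \<le> \<bar>W \<omega>\<bar> powr q}"
    using assms by (intro finite_measure_mono) (auto intro!: powr_mono2)
  also have "\<dots> \<le> expectation (\<lambda>\<omega>. \<bar>W \<omega>\<bar> powr q) / L powr q"
    using assms by (intro integral_Markov_inequality_measure[where A="{}"]) auto
  finally show ?thesis .
qed

lemma (in prob_space) expectation_square_sum_indep:
  fixes T :: "'i \<Rightarrow> 'a \<Rightarrow> real"
  assumes "finite B" and indep: "indep_vars (\<lambda>_. borel) T B"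
    and bounded: "\<And>i \<omega>. i \<in> B \<Longrightarrow> \<bar>T i \<omega>\<bar> \<le> C"
    and centered: "\<And>i. i \<in> B \<Longrightarrow> expectation (T i) = 0"
  shows "expectation (\<lambda>\<omega>. (\<Sum>i\<in>B. T i \<omega>)\<^sup>2) = (\<Sum>i\<in>B. expectation (\<lambda>\<omega>. (T i \<omega>)\<^sup>2))"
proof -
  have [measurable]: "T i \<in> borel_measurable M" if "i \<in> B" for i
    using indep that unfolding indep_vars_def by auto
  have int: "integrable M (T i)" if "i \<in> B" for i
    using that bounded by (intro integrable_const_bound[where B=C]) auto
  have int2: "integrable M (\<lambda>\<omega>. T i \<omega> * T j \<omega>)" if "i \<in> B" "j \<in> B" for i j
  proof -
    have "0 \<le> C" using bounded[OF that(1)] abs_ge_zero order_trans by blast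
    then show ?thesis
      using that bounded
      by (intro integrable_const_bound[where B="C * C"]) (auto simp: abs_mult intro!: mult_mono AE_I2)
  qed
  have cross: "expectation (\<lambda>\<omega>. T i \<omega> * T j \<omega>) = 0" if "i \<in> B" "j \<in> B" "i \<noteq> j" for i j
  proof -
    have "expectation (\<lambda>\<omega>. \<Prod>m\<in>{i, j}. T m \<omega>) = (\<Prod>m\<in>{i, j}. expectation (T m))"
      using that int by (intro indep_vars_lebesgue_integral indep_vars_subset[OF indep]) auto
    then show ?thesis using that centered by simp
  qed
  have "expectation (\<lambda>\<omega>. (\<Sum>i\<in>B. T i \<omega>)\<^sup>2) = (\<Sum>i\<in>B. \<Sum>j\<in>B. expectation (\<lambda>\<omega>. T i \<omega> * T j \<omega>))"
    unfolding power2_eq_square sum_product using \<open>finite B\<close> int2 by (simp add: integrable_sum)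
  also have "\<dots> = (\<Sum>i\<in>B. expectation (\<lambda>\<omega>. T i \<omega> * T i \<omega>))"
  proof (rule sum.cong[OF refl])
    fix i assume "i \<in> B"
    then have "(\<Sum>j\<in>B - {i}. expectation (\<lambda>\<omega>. T i \<omega> * T j \<omega>)) = 0"
      using cross by (intro sum.neutral) auto
    then show "(\<Sum>j\<in>B. expectation (\<lambda>\<omega>. T i \<omega> * T j \<omega>)) = expectation (\<lambda>\<omega>. T i \<omega> * T i \<omega>)"
      using \<open>finite B\<close> \<open>i \<in> B\<close> by (simp add: sum.remove)
  qed
  finally show ?thesis by (simp add: power2_eq_square)
qed

lemma (in prob_space) expectation_truncate_at_square_le:
  assumes "W \<in> borel_measurable M" "integrable M (\<lambda>\<omega>. \<bar>W \<omega>\<bar> powr (1 + a))" "0 \<le> L" "a \<le> 1"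
  shows "expectation (\<lambda>\<omega>. (truncate_at L (W \<omega>))\<^sup>2)
    \<le> expectation (\<lambda>\<omega>. \<bar>W \<omega>\<bar> powr (1 + a)) * L powr (1 - a)"
proof -
  have "(truncate_at L (W \<omega>))\<^sup>2 \<le> L\<^sup>2" for \<omega>
    using power_mono[of "\<bar>truncate_at L (W \<omega>)\<bar>" L 2] abs_truncate_at_le[OF \<open>0 \<le> L\<close>] by simp
  then have "integrable M (\<lambda>\<omega>. (truncate_at L (W \<omega>))\<^sup>2)"
    using assms(1) by (intro integrable_const_bound[where B="L\<^sup>2"]) auto
  then have "expectation (\<lambda>\<omega>. (truncate_at L (W \<omega>))\<^sup>2)
      \<le> expectation (\<lambda>\<omega>. \<bar>W \<omega>\<bar> powr (1 + a) * L powr (1 - a))"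
    using assms by (intro integral_mono integrable_mult_left truncate_at_square_le)
  then show ?thesis by simp
qed

lemma (in prob_space) prob_abs_sum_truncate_at_ge_le:
  fixes W :: "'i \<Rightarrow> 'a \<Rightarrow> real" and L a m :: real
  assumes "finite B" "0 < L" "a \<le> 1"
    and meas: "\<And>i. i \<in> B \<Longrightarrow> W i \<in> borel_measurable M"
    and indep: "indep_vars (\<lambda>_. borel) (\<lambda>i \<omega>. truncate_at L (W i \<omega>)) B"
    and centered: "\<And>i. i \<in> B \<Longrightarrow> expectation (\<lambda>\<omega>. truncate_at L (W i \<omega>)) = 0"
    and int: "\<And>i. i \<in> B \<Longrightarrow> integrable M (\<lambda>\<omega>. \<bar>W i \<omega>\<bar> powr (1 + a))"
    and moment: "\<And>i. i \<in> B \<Longrightarrow> expectation (\<lambda>\<omega>. \<bar>W i \<omega>\<bar> powr (1 + a)) \<le> m"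
  shows "prob {\<omega>\<in>space M. L \<le> \<bar>\<Sum>i\<in>B. truncate_at L (W i \<omega>)\<bar>} \<le> card B * m / L powr (1 + a)"
proof -
  define T where "T i \<omega> = truncate_at L (W i \<omega>)" for i \<omega>
  have T_bounded: "\<bar>T i \<omega>\<bar> \<le> L" for i \<omega>
    unfolding T_def using \<open>0 < L\<close> by (simp add: abs_truncate_at_le)
  have T_meas: "T i \<in> borel_measurable M" if "i \<in> B" for i
    unfolding T_def using meas[OF that] by measurable
  have sum_T_meas: "(\<lambda>\<omega>. \<Sum>i\<in>B. T i \<omega>) \<in> borel_measurable M"
    using T_meas by (rule borel_measurable_sum)
  have "prob {\<omega>\<in>space M. L \<le> \<bar>\<Sum>i\<in>B. T i \<omega>\<bar>} \<le> expectation (\<lambda>\<omega>. (\<Sum>i\<in>B. T i \<omega>)\<^sup>2) / L\<^sup>2"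
  proof (rule second_moment_method[OF sum_T_meas _ \<open>0 < L\<close>])
    have "\<bar>\<Sum>i\<in>B. T i \<omega>\<bar> \<le> card B * L" for \<omega>
      by (rule order_trans[OF sum_abs sum_bounded_above]) (rule T_bounded)
    then have "\<bar>(\<Sum>i\<in>B. T i \<omega>)\<^sup>2\<bar> \<le> (card B * L)\<^sup>2" for \<omega>
      using power_mono[of "\<bar>\<Sum>i\<in>B. T i \<omega>\<bar>" "card B * L" 2] by simp
    then show "integrable M (\<lambda>\<omega>. (\<Sum>i\<in>B. T i \<omega>)\<^sup>2)"
      using sum_T_meas by (intro integrable_const_bound[where B="(card B * L)\<^sup>2"]) auto
  qed
  also have "expectation (\<lambda>\<omega>. (\<Sum>i\<in>B. T i \<omega>)\<^sup>2) = (\<Sum>i\<in>B. expectation (\<lambda>\<omega>. (T i \<omega>)\<^sup>2))"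
    using \<open>finite B\<close> indep centered T_bounded unfolding T_def
    by (intro expectation_square_sum_indep[where C=L]) auto
  also have "\<dots> \<le> card B * (m * L powr (1 - a))"
  proof (rule sum_bounded_above)
    fix i assume "i \<in> B"
    have "expectation (\<lambda>\<omega>. (T i \<omega>)\<^sup>2) \<le> expectation (\<lambda>\<omega>. \<bar>W i \<omega>\<bar> powr (1 + a)) * L powr (1 - a)"
      unfolding T_def using \<open>i \<in> B\<close> \<open>0 < L\<close> \<open>a \<le> 1\<close> meas int
      by (intro expectation_truncate_at_square_le) auto
    also have "\<dots> \<le> m * L powr (1 - a)"
      using moment[OF \<open>i \<in> B\<close>] by (simp add: mult_right_mono)
    finally show "expectation (\<lambda>\<omega>. (T i \<omega>)\<^sup>2) \<le> m * L powr (1 - a)" .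
  qed
  also have "L\<^sup>2 = L powr (1 + a) * L powr (1 - a)"
    using \<open>0 < L\<close> by (simp add: powr_add[symmetric])
  finally show ?thesis
    using \<open>0 < L\<close> unfolding T_def by (simp add: divide_right_mono)
qed

lemma (in prob_space) prob_abs_sum_gt_le:
  fixes W :: "'i \<Rightarrow> 'a \<Rightarrow> real" and L a m :: real
  assumes "finite B" "0 < L" "0 \<le> a" "a \<le> 1"
    and meas: "\<And>i. i \<in> B \<Longrightarrow> W i \<in> borel_measurable M"
    and indep: "indep_vars (\<lambda>_. borel) (\<lambda>i \<omega>. truncate_at L (W i \<omega>)) B"
    and centered: "\<And>i. i \<in> B \<Longrightarrow> expectation (\<lambda>\<omega>. truncate_at L (W i \<omega>)) = 0"
    and int: "\<And>i. i \<in> B \<Longrightarrow> integrable M (\<lambda>\<omega>. \<bar>W i \<omega>\<bar> powr (1 + a))"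
    and moment: "\<And>i. i \<in> B \<Longrightarrow> expectation (\<lambda>\<omega>. \<bar>W i \<omega>\<bar> powr (1 + a)) \<le> m"
  shows "prob {\<omega>\<in>space M. L < \<bar>\<Sum>i\<in>B. W i \<omega>\<bar>} \<le> 2 * real (card B) * m / L powr (1 + a)"
proof -
  let ?big = "\<lambda>i. {\<omega>\<in>space M. L < \<bar>W i \<omega>\<bar>}"
  let ?T = "{\<omega>\<in>space M. L \<le> \<bar>\<Sum>i\<in>B. truncate_at L (W i \<omega>)\<bar>}"
  have big_events: "?big i \<in> events" if "i \<in> B" for i
    using meas[OF that] by measurable
  have "?T \<in> events"
    using meas by measurable
  have untruncated: "(\<Sum>i\<in>B. truncate_at L (W i \<omega>)) = (\<Sum>i\<in>B. W i \<omega>)"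
    if "\<forall>i\<in>B. \<bar>W i \<omega>\<bar> \<le> L" for \<omega>
    using that unfolding truncate_at_def by (intro sum.cong) auto
  have "{\<omega>\<in>space M. L < \<bar>\<Sum>i\<in>B. W i \<omega>\<bar>} \<subseteq> (\<Union>i\<in>B. ?big i) \<union> ?T"
  proof
    fix \<omega> assume "\<omega> \<in> {\<omega>\<in>space M. L < \<bar>\<Sum>i\<in>B. W i \<omega>\<bar>}"
    then show "\<omega> \<in> (\<Union>i\<in>B. ?big i) \<union> ?T"
      using untruncated[of \<omega>] by (cases "\<forall>i\<in>B. \<bar>W i \<omega>\<bar> \<le> L") (auto simp: not_le)
  qed
  then have "prob {\<omega>\<in>space M. L < \<bar>\<Sum>i\<in>B. W i \<omega>\<bar>} \<le> prob ((\<Union>i\<in>B. ?big i) \<union> ?T)"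
    using \<open>finite B\<close> big_events \<open>?T \<in> events\<close> by (intro finite_measure_mono sets.Un sets.finite_UN) auto
  also have "\<dots> \<le> (\<Sum>i\<in>B. prob (?big i)) + prob ?T"
    using \<open>finite B\<close> big_events \<open>?T \<in> events\<close>
    by (intro order_trans[OF measure_Un_le] add_right_mono measure_UNION_le sets.finite_UN) auto
  also have "(\<Sum>i\<in>B. prob (?big i)) \<le> card B * (m / L powr (1 + a))"
  proof (rule sum_bounded_above)
    fix i assume "i \<in> B"
    have "prob (?big i) \<le> expectation (\<lambda>\<omega>. \<bar>W i \<omega>\<bar> powr (1 + a)) / L powr (1 + a)"
      using \<open>i \<in> B\<close> \<open>0 < L\<close> \<open>0 \<le> a\<close> meas int by (intro prob_abs_gt_le_moment) auto
    also have "\<dots> \<le> m / L powr (1 + a)"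
      using moment[OF \<open>i \<in> B\<close>] by (simp add: divide_right_mono)
    finally show "prob (?big i) \<le> m / L powr (1 + a)" .
  qed
  also have "prob ?T \<le> card B * m / L powr (1 + a)"
    using assms by (intro prob_abs_sum_truncate_at_ge_le) auto
  finally show ?thesis by (simp add: mult_ac)
qed

definition mom_radius :: "real \<Rightarrow> real \<Rightarrow> real \<Rightarrow> real" where
  "mom_radius m a t = (12 * m) powr (1 / (1 + a)) * (1 / t) powr (a / (1 + a))"

lemma mom_radius_nonneg: "0 \<le> mom_radius m a t"
  unfolding mom_radius_def by simp

lemma mom_radius_pos: "0 < m \<Longrightarrow> 0 < t \<Longrightarrow> 0 < mom_radius m a t"
  unfolding mom_radius_def by simp

lemma moment_bound_mom_radius_le:
  fixes t c a m :: real
  assumes "1 \<le> t" "t \<le> c" "0 < a" "0 < m"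
  shows "2 * c * m / (c * mom_radius m a t) powr (1 + a) \<le> 1 / 6"
proof -
  have "mom_radius m a t powr (1 + a) = 12 * m / t powr a"
    using assms unfolding mom_radius_def
    by (simp add: powr_mult powr_powr powr_divide)
  moreover have "(c * mom_radius m a t) powr (1 + a) = c powr (1 + a) * mom_radius m a t powr (1 + a)"
    using assms mom_radius_nonneg[of m a t] by (simp add: powr_mult)
  ultimately have "(c * mom_radius m a t) powr (1 + a) = 12 * c * m * (c powr a / t powr a)"
    using assms by (simp add: powr_add)
  moreover have "1 \<le> c powr a / t powr a"
    using assms by (simp add: powr_divide[symmetric] ge_one_powr_ge_zero)
  then have "12 * c * m * 1 \<le> 12 * c * m * (c powr a / t powr a)"
    using assms by (intro mult_left_mono) auto
  ultimately have "12 * c * m \<le> (c * mom_radius m a t) powr (1 + a)"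
    by simp
  moreover have "0 < 12 * c * m"
    using assms by simp
  ultimately have "2 * c * m / (c * mom_radius m a t) powr (1 + a) \<le> 2 * c * m / (12 * c * m)"
    using assms mom_radius_pos[of m t a] by (intro divide_left_mono mult_pos_pos) simp_all
  also have "\<dots> = 1 / 6"
    using assms by simp
  finally show ?thesis .
qed

lemma (in prob_space) prob_abs_sum_gt_mom_radius_le:
  fixes W :: "'i \<Rightarrow> 'a \<Rightarrow> real" and t a m :: real
  assumes "finite B" "1 \<le> t" "t \<le> card B" "0 < a" "a \<le> 1"
    and meas: "\<And>i. i \<in> B \<Longrightarrow> W i \<in> borel_measurable M"
    and indep: "\<And>L. indep_vars (\<lambda>_. borel) (\<lambda>i \<omega>. truncate_at L (W i \<omega>)) B"
    and centered: "\<And>i L. i \<in> B \<Longrightarrow> expectation (\<lambda>\<omega>. truncate_at L (W i \<omega>)) = 0"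
    and int: "\<And>i. i \<in> B \<Longrightarrow> integrable M (\<lambda>\<omega>. \<bar>W i \<omega>\<bar> powr (1 + a))"
    and moment: "\<And>i. i \<in> B \<Longrightarrow> expectation (\<lambda>\<omega>. \<bar>W i \<omega>\<bar> powr (1 + a)) \<le> m"
  shows "prob {\<omega>\<in>space M. card B * mom_radius m a t < \<bar>\<Sum>i\<in>B. W i \<omega>\<bar>} \<le> 1 / 6"
proof (cases "0 < m")
  case True
  then have "0 < card B * mom_radius m a t"
    using assms by (simp add: mom_radius_pos)
  then have "prob {\<omega>\<in>space M. card B * mom_radius m a t < \<bar>\<Sum>i\<in>B. W i \<omega>\<bar>}
      \<le> 2 * real (card B) * m / (card B * mom_radius m a t) powr (1 + a)"
    using assms by (intro prob_abs_sum_gt_le) auto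
  also have "\<dots> \<le> 1 / 6"
    using assms True by (intro moment_bound_mom_radius_le) auto
  finally show ?thesis .
next
  case False
  have "AE \<omega> in M. W i \<omega> = 0" if "i \<in> B" for i
  proof -
    have "0 \<le> expectation (\<lambda>\<omega>. \<bar>W i \<omega>\<bar> powr (1 + a))" by simp
    then have "expectation (\<lambda>\<omega>. \<bar>W i \<omega>\<bar> powr (1 + a)) = 0"
      using moment[OF that] False by linarith
    then have "AE \<omega> in M. \<bar>W i \<omega>\<bar> powr (1 + a) = 0"
      using int[OF that] by (subst integral_nonneg_eq_0_iff_AE[symmetric]) auto
    then show ?thesis by eventually_elim simp
  qed
  then have "AE \<omega> in M. \<forall>i\<in>B. W i \<omega> = 0"
    using \<open>finite B\<close> by (simp add: AE_finite_all)
  moreover have "0 \<le> card B * mom_radius m a t"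
    by (simp add: mom_radius_nonneg)
  ultimately have "AE \<omega> in M. \<not> card B * mom_radius m a t < \<bar>\<Sum>i\<in>B. W i \<omega>\<bar>"
    by (auto elim!: eventually_mono)
  then show ?thesis by (simp add: prob_eq_0_AE)
qed

lemma (in prob_space) prob_sum_ge_Hoeffding:
  fixes X :: "'i \<Rightarrow> 'a \<Rightarrow> real"
  assumes "finite I" "indep_vars (\<lambda>_. borel) X I"
    and "\<And>i. i \<in> I \<Longrightarrow> AE \<omega> in M. X i \<omega> \<in> {a i..b i}"
    and "0 \<le> \<epsilon>" "0 < (\<Sum>i\<in>I. (b i - a i)\<^sup>2)"
  shows "prob {\<omega>\<in>space M. (\<Sum>i\<in>I. expectation (X i)) + \<epsilon> \<le> (\<Sum>i\<in>I. X i \<omega>)}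
     \<le> exp (- 2 * \<epsilon>\<^sup>2 / (\<Sum>i\<in>I. (b i - a i)\<^sup>2))"
proof -
  interpret Hoeffding_ineq M I X a b "\<Sum>i\<in>I. expectation (X i)"
    by unfold_locales (use assms in auto)
  show ?thesis using Hoeffding_ineq_ge assms by simp
qed

lemma (in prob_space) prob_sum_signs_ge_half_le:
  fixes \<alpha> :: "'i \<Rightarrow> 'a \<Rightarrow> real"
  assumes "finite B" "0 < card B" "indep_vars (\<lambda>_. borel) \<alpha> B"
    and "\<And>i. i \<in> B \<Longrightarrow> AE \<omega> in M. \<alpha> i \<omega> \<in> {-1..1}"
    and "\<And>i. i \<in> B \<Longrightarrow> expectation (\<alpha> i) = 0"
  shows "prob {\<omega>\<in>space M. card B / 2 \<le> (\<Sum>i\<in>B. \<alpha> i \<omega>)} \<le> exp (- real (card B) / 8)"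
proof -
  have "prob {\<omega>\<in>space M. card B / 2 \<le> (\<Sum>i\<in>B. \<alpha> i \<omega>)}
      \<le> exp (- 2 * (card B / 2)\<^sup>2 / (\<Sum>i\<in>B. (1 - (- 1))\<^sup>2))"
    using prob_sum_ge_Hoeffding[of B \<alpha> "\<lambda>_. - 1" "\<lambda>_. 1" "card B / 2"] assms by simp
  also have "\<dots> = exp (- real (card B) / 8)"
    using assms by (simp add: power2_eq_square field_simps)
  finally show ?thesis .
qed

lemma (in prob_space) prob_half_of_indep_events_le:
  fixes P :: "'i \<Rightarrow> 'a \<Rightarrow> bool"
  assumes "finite I" "0 < card I"
    and indep: "indep_vars (\<lambda>_. borel) (\<lambda>l \<omega>. of_bool (P l \<omega>) :: real) I"
    and events: "\<And>l. l \<in> I \<Longrightarrow> {\<omega>\<in>space M. P l \<omega>} \<in> events"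
    and rare: "\<And>l. l \<in> I \<Longrightarrow> prob {\<omega>\<in>space M. P l \<omega>} \<le> 1 / 6"
  shows "prob {\<omega>\<in>space M. card I \<le> 2 * card {l\<in>I. P l \<omega>}} \<le> exp (- real (card I) / 8)"
proof -
  let ?Y = "\<lambda>l \<omega>. of_bool (P l \<omega>) :: real"
  define \<epsilon> where "\<epsilon> = card I / 2 - (\<Sum>l\<in>I. expectation (?Y l))"
  have "expectation (?Y l) = prob {\<omega>\<in>space M. P l \<omega>}" if "l \<in> I" for l
  proof -
    have "expectation (?Y l) = expectation (indicator {\<omega>\<in>space M. P l \<omega>})"
      by (intro Bochner_Integration.integral_cong) (auto simp: indicator_def)
    then show ?thesis using events[OF that] by simp
  qed
  then have "(\<Sum>l\<in>I. expectation (?Y l)) \<le> card I / 6"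
    using sum_mono[of I "\<lambda>l. expectation (?Y l)" "\<lambda>_. 1 / 6"] rare by simp
  then have "card I / 3 \<le> \<epsilon>" unfolding \<epsilon>_def by simp
  have "card I \<le> 2 * card {l\<in>I. P l \<omega>} \<longleftrightarrow> (\<Sum>l\<in>I. expectation (?Y l)) + \<epsilon> \<le> (\<Sum>l\<in>I. ?Y l \<omega>)"
    for \<omega>
  proof -
    have "real (card {l\<in>I. P l \<omega>}) = (\<Sum>l\<in>I. ?Y l \<omega>)"
      using \<open>finite I\<close> by (simp add: Int_def conj_commute)
    then show ?thesis unfolding \<epsilon>_def by linarith
  qed
  then have "prob {\<omega>\<in>space M. card I \<le> 2 * card {l\<in>I. P l \<omega>}}
      = prob {\<omega>\<in>space M. (\<Sum>l\<in>I. expectation (?Y l)) + \<epsilon> \<le> (\<Sum>l\<in>I. ?Y l \<omega>)}"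
    by simp
  also have "\<dots> \<le> exp (- 2 * \<epsilon>\<^sup>2 / (\<Sum>l\<in>I. (1 - 0)\<^sup>2))"
    using assms \<open>card I / 3 \<le> \<epsilon>\<close>
    by (intro prob_sum_ge_Hoeffding[where a="\<lambda>_. 0" and b="\<lambda>_. 1"]) auto
  also have "\<dots> \<le> exp (- real (card I) / 8)"
  proof -
    have "(card I / 3)\<^sup>2 \<le> \<epsilon>\<^sup>2"
      using \<open>card I / 3 \<le> \<epsilon>\<close> by (intro power_mono) auto
    then have "real (card I) * card I \<le> 9 * (\<epsilon> * \<epsilon>)"
      by (simp add: power2_eq_square)
    then have "real (card I) * card I / 8 \<le> 2 * \<epsilon>\<^sup>2"
      unfolding power2_eq_square using zero_le_square[of \<epsilon>] by linarith
    then show ?thesis using \<open>0 < card I\<close> by (simp add: field_simps)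
  qed
  finally show ?thesis .
qed

section \<open>The randomized median-of-means setting\<close>

(* The hypotheses of theorem6 without the law of the tie-breaking bit p: the bound holds for
   every value of p. *)
locale rmom_setting = prob_space M for M :: "'a measure" +
  fixes X \<alpha> :: "nat \<Rightarrow> 'a \<Rightarrow> real" and p :: "'a \<Rightarrow> bool" and n k :: nat and \<mu> a Mm :: real
  assumes indep: "indep_vars (\<lambda>_. borel)
      (\<lambda>j \<omega>. case j of Inl i \<Rightarrow> X i \<omega> | Inr (Inl i) \<Rightarrow> \<alpha> i \<omega> | Inr (Inr u) \<Rightarrow> of_bool (p \<omega>))
      (Inl ` {1..n} \<union> Inr ` Inl ` {1..n} \<union> {Inr (Inr ())})"
    and ident: "\<And>i. i \<in> {1..n} \<Longrightarrow> distr M borel (X i) = distr M borel (X 1)"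
    and symm: "distr M borel (\<lambda>\<omega>. X 1 \<omega> - \<mu>) = distr M borel (\<lambda>\<omega>. \<mu> - X 1 \<omega>)"
    and a: "0 < a" "a \<le> 1"
    and integrable_X1: "integrable M (X 1)"
    and integrable_moment: "integrable M (\<lambda>\<omega>. \<bar>X 1 \<omega> - expectation (X 1)\<bar> powr (1 + a))"
    and moment: "expectation (\<lambda>\<omega>. \<bar>X 1 \<omega> - expectation (X 1)\<bar> powr (1 + a)) = Mm"
    and sign_plus: "\<And>i. i \<in> {1..n} \<Longrightarrow> prob {\<omega> \<in> space M. \<alpha> i \<omega> = 1} = 1 / 2"
    and sign_minus: "\<And>i. i \<in> {1..n} \<Longrightarrow> prob {\<omega> \<in> space M. \<alpha> i \<omega> = -1} = 1 / 2"
    and k: "1 \<le> k" "k \<le> n"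
begin

abbreviation radius :: real where
  "radius \<equiv> mom_radius Mm a (n div k)"

lemma X_measurable:
  assumes "i \<in> {1..n}"
  shows "X i \<in> borel_measurable M"
proof -
  have "Inl i \<in> Inl ` {1..n} \<union> Inr ` Inl ` {1..n} \<union> {Inr (Inr ())}" using assms by blast
  from indep_vars_def[THEN iffD1, OF indep, THEN conjunct1, rule_format, OF this]
  show ?thesis by simp
qed

lemma sign_measurable:
  assumes "i \<in> {1..n}"
  shows "\<alpha> i \<in> borel_measurable M"
proof -
  have "Inr (Inl i) \<in> Inl ` {1..n} \<union> Inr ` Inl ` {1..n} \<union> {Inr (Inr ())}" using assms by blast
  from indep_vars_def[THEN iffD1, OF indep, THEN conjunct1, rule_format, OF this]
  show ?thesis by simp
qed

lemma observation_measurable: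
  fixes f :: "real \<times> real \<Rightarrow> real"
  assumes "i \<in> {1..n}" "f \<in> borel_measurable (borel \<Otimes>\<^sub>M borel)"
  shows "(\<lambda>\<omega>. f (X i \<omega>, \<alpha> i \<omega>)) \<in> borel_measurable M"
proof -
  have "(\<lambda>\<omega>. (X i \<omega>, \<alpha> i \<omega>)) \<in> M \<rightarrow>\<^sub>M borel \<Otimes>\<^sub>M borel"
    using X_measurable[OF assms(1)] sign_measurable[OF assms(1)] by (rule measurable_Pair)
  from measurable_compose[OF this assms(2)] show ?thesis .
qed

lemma block_sum_measurable:
  fixes f :: "real \<times> real \<Rightarrow> real"
  assumes "f \<in> borel_measurable (borel \<Otimes>\<^sub>M borel)"
  shows "(\<lambda>\<omega>. \<Sum>i\<in>block n k l. f (X i \<omega>, \<alpha> i \<omega>)) \<in> borel_measurable M"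
  using block_subset by (intro borel_measurable_sum observation_measurable assms) blast

lemma indep_vars_block_sums:
  fixes f :: "real \<times> real \<Rightarrow> real" and g :: "'l \<Rightarrow> real \<Rightarrow> real" and D :: "'l \<Rightarrow> nat set"
  assumes f: "f \<in> borel_measurable (borel \<Otimes>\<^sub>M borel)"
    and g: "\<And>l. g l \<in> borel_measurable borel"
    and D: "\<And>l. l \<in> L \<Longrightarrow> D l \<subseteq> {1..n}" "disjoint_family_on D L"
  shows "indep_vars (\<lambda>_. borel) (\<lambda>l \<omega>. g l (\<Sum>i\<in>D l. f (X i \<omega>, \<alpha> i \<omega>))) L"
proof -
  define K :: "'l \<Rightarrow> (nat + nat + unit) set" where "K l = Inl ` D l \<union> Inr ` Inl ` D l" for l
  define G where "G l h = g l (\<Sum>i\<in>D l. f (h (Inl i), h (Inr (Inl i))))"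
    for l and h :: "nat + nat + unit \<Rightarrow> real"
  have disj: "disjoint_family_on K L"
    using D(2) unfolding disjoint_family_on_def K_def by blast
  have sub: "K l \<subseteq> Inl ` {1..n} \<union> Inr ` Inl ` {1..n} \<union> {Inr (Inr ())}" if "l \<in> L" for l
    using D(1)[OF that] unfolding K_def by blast
  have "indep_vars (\<lambda>l. PiM (K l) (\<lambda>_. borel))
      (\<lambda>l \<omega>. restrict (\<lambda>j. case j of Inl i \<Rightarrow> X i \<omega> | Inr (Inl i) \<Rightarrow> \<alpha> i \<omega> | Inr (Inr u) \<Rightarrow> of_bool (p \<omega>)) (K l)) L"
    by (rule indep_vars_restrict[OF indep sub disj])
  moreover have "G l \<in> borel_measurable (PiM (K l) (\<lambda>_. borel))" for l
  proof -
    have "(\<lambda>h. f (h (Inl i), h (Inr (Inl i)))) \<in> borel_measurable (PiM (K l) (\<lambda>_. borel))"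
      if "i \<in> D l" for i
    proof -
      have "Inl i \<in> K l" "Inr (Inl i) \<in> K l" using that by (auto simp: K_def)
      then have "(\<lambda>h. (h (Inl i), h (Inr (Inl i)))) \<in> PiM (K l) (\<lambda>_. borel) \<rightarrow>\<^sub>M borel \<Otimes>\<^sub>M borel"
        by measurable
      from measurable_compose[OF this f] show ?thesis .
    qed
    then show ?thesis
      unfolding G_def using g by (intro measurable_compose[OF borel_measurable_sum]) auto
  qed
  ultimately have "indep_vars (\<lambda>_. borel) (\<lambda>l \<omega>. G l (restrict
      (\<lambda>j. case j of Inl i \<Rightarrow> X i \<omega> | Inr (Inl i) \<Rightarrow> \<alpha> i \<omega> | Inr (Inr u) \<Rightarrow> of_bool (p \<omega>)) (K l))) L"
    by (rule indep_vars_compose2)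
  then show ?thesis
    by (rule indep_vars_cong[THEN iffD1, rotated 3]) (auto simp: G_def K_def fun_eq_iff intro!: sum.cong)
qed

lemma indep_vars_observations:
  fixes f :: "real \<times> real \<Rightarrow> real"
  assumes "f \<in> borel_measurable (borel \<Otimes>\<^sub>M borel)" "B \<subseteq> {1..n}"
  shows "indep_vars (\<lambda>_. borel) (\<lambda>i \<omega>. f (X i \<omega>, \<alpha> i \<omega>)) B"
proof -
  have "indep_vars (\<lambda>_. borel) (\<lambda>i \<omega>. (\<lambda>v. v) (\<Sum>j\<in>{i}. f (X j \<omega>, \<alpha> j \<omega>))) B"
    using assms(2) by (intro indep_vars_block_sums[OF assms(1)]) (auto simp: disjoint_family_on_def)
  then show ?thesis by simp
qed

lemma expectation_X1: "expectation (X 1) = \<mu>"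
proof -
  have "X 1 \<in> borel_measurable M"
    using k by (intro X_measurable) auto
  then have "(\<lambda>\<omega>. X 1 \<omega> - \<mu>) \<in> borel_measurable M" "(\<lambda>\<omega>. \<mu> - X 1 \<omega>) \<in> borel_measurable M"
    by measurable
  from integral_cong_distr[OF symm this measurable_ident_sets[OF refl]]
  have "expectation (\<lambda>\<omega>. X 1 \<omega> - \<mu>) = expectation (\<lambda>\<omega>. \<mu> - X 1 \<omega>)" .
  then show ?thesis
    using integrable_X1 by (simp add: prob_space)
qed

lemma moment_deviation:
  assumes "i \<in> {1..n}"
  shows "integrable M (\<lambda>\<omega>. \<bar>X i \<omega> - \<mu>\<bar> powr (1 + a))"
    and "expectation (\<lambda>\<omega>. \<bar>X i \<omega> - \<mu>\<bar> powr (1 + a)) = Mm"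
proof -
  have X: "X 1 \<in> borel_measurable M" "X i \<in> borel_measurable M"
    using k assms by (auto intro: X_measurable)
  have f: "(\<lambda>x. \<bar>x - \<mu>\<bar> powr (1 + a)) \<in> borel_measurable borel" by measurable
  show "integrable M (\<lambda>\<omega>. \<bar>X i \<omega> - \<mu>\<bar> powr (1 + a))"
    using integrable_cong_distr[OF ident[OF assms] X(2,1) f] integrable_moment expectation_X1 by simp
  show "expectation (\<lambda>\<omega>. \<bar>X i \<omega> - \<mu>\<bar> powr (1 + a)) = Mm"
    using integral_cong_distr[OF ident[OF assms] X(2,1) f] moment expectation_X1 by simp
qed

lemma expectation_truncate_deviation:
  assumes "i \<in> {1..n}"
  shows "expectation (\<lambda>\<omega>. truncate_at L (X i \<omega> - \<mu>)) = 0"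
proof -
  have X: "X 1 \<in> borel_measurable M" "X i \<in> borel_measurable M"
    using k assms by (auto intro: X_measurable)
  then have dev: "(\<lambda>\<omega>. X 1 \<omega> - \<mu>) \<in> borel_measurable M" "(\<lambda>\<omega>. \<mu> - X 1 \<omega>) \<in> borel_measurable M"
    by measurable
  have "expectation (\<lambda>\<omega>. truncate_at L (X 1 \<omega> - \<mu>)) = expectation (\<lambda>\<omega>. truncate_at L (\<mu> - X 1 \<omega>))"
    by (rule integral_cong_distr[OF symm dev borel_measurable_truncate_at])
  also have "\<dots> = - expectation (\<lambda>\<omega>. truncate_at L (X 1 \<omega> - \<mu>))"
    using truncate_at_uminus[of L "X 1 _ - \<mu>"] by simp
  finally have "expectation (\<lambda>\<omega>. truncate_at L (X 1 \<omega> - \<mu>)) = 0" by simp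
  moreover have "(\<lambda>x. truncate_at L (x - \<mu>)) \<in> borel_measurable borel"
    by measurable
  then have "expectation (\<lambda>\<omega>. truncate_at L (X i \<omega> - \<mu>)) = expectation (\<lambda>\<omega>. truncate_at L (X 1 \<omega> - \<mu>))"
    by (rule integral_cong_distr[OF ident[OF assms] X(2,1)])
  ultimately show ?thesis by simp
qed

lemma sign_AE: "i \<in> {1..n} \<Longrightarrow> AE \<omega> in M. \<alpha> i \<omega> = 1 \<or> \<alpha> i \<omega> = -1"
proof -
  assume i: "i \<in> {1..n}"
  note [measurable] = sign_measurable[OF i]
  have "prob ({\<omega>\<in>space M. \<alpha> i \<omega> = 1} \<union> {\<omega>\<in>space M. \<alpha> i \<omega> = -1}) =
      prob {\<omega>\<in>space M. \<alpha> i \<omega> = 1} + prob {\<omega>\<in>space M. \<alpha> i \<omega> = -1}"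
    by (intro finite_measure_Union) auto
  also have "\<dots> = 1" using sign_plus[OF i] sign_minus[OF i] by simp
  finally show ?thesis by (auto dest!: AE_prob_1)
qed

lemma integrable_sign:
  assumes "i \<in> {1..n}"
  shows "integrable M (\<alpha> i)"
  using sign_AE[OF assms] sign_measurable[OF assms]
  by (intro integrable_const_bound[where B=1]) (auto elim!: eventually_mono)

lemma expectation_sign: "i \<in> {1..n} \<Longrightarrow> expectation (\<alpha> i) = 0"
proof -
  assume i: "i \<in> {1..n}"
  note [measurable] = sign_measurable[OF i]
  have "expectation (\<alpha> i) = expectation (\<lambda>\<omega>. indicator {\<omega>\<in>space M. \<alpha> i \<omega> = 1} \<omega>
      - indicator {\<omega>\<in>space M. \<alpha> i \<omega> = -1} \<omega>)"
    by (intro integral_cong_AE) (auto simp: indicator_def intro!: eventually_mono[OF sign_AE[OF i]])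
  also have "\<dots> = 0"
    using sign_plus[OF i] sign_minus[OF i]
    by (subst Bochner_Integration.integral_diff) (auto simp: less_top[symmetric])
  finally show ?thesis .
qed

lemma expectation_sign_times_truncate:
  assumes "i \<in> {1..n}"
  shows "expectation (\<lambda>\<omega>. \<alpha> i \<omega> * truncate_at L (X i \<omega> - \<mu>)) = 0"
proof -
  let ?Z = "\<lambda>j \<omega>. case j of Inl i \<Rightarrow> X i \<omega> | Inr (Inl i) \<Rightarrow> \<alpha> i \<omega> | Inr (Inr u) \<Rightarrow> of_bool (p \<omega>)"
  let ?h = "\<lambda>j :: nat + nat + unit. case j of Inl _ \<Rightarrow> (\<lambda>x. truncate_at L (x - \<mu>)) | Inr _ \<Rightarrow> (\<lambda>x. x)"
  have "indep_vars (\<lambda>_. borel) (\<lambda>j \<omega>. ?h j (?Z j \<omega>)) {Inl i, Inr (Inl i)}"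
    using assms
    by (intro indep_vars_compose2[OF indep_vars_subset[OF indep]]) (auto split: sum.split)
  moreover have "integrable M (\<lambda>\<omega>. ?h j (?Z j \<omega>))" if "j \<in> {Inl i, Inr (Inl i)}" for j
  proof -
    have "(\<lambda>\<omega>. X i \<omega> - \<mu>) \<in> borel_measurable M"
      using X_measurable[OF assms] by measurable
    then show ?thesis
      using that integrable_sign[OF assms] by (auto intro: integrable_truncate_at)
  qed
  ultimately have "expectation (\<lambda>\<omega>. \<Prod>j\<in>{Inl i, Inr (Inl i)}. ?h j (?Z j \<omega>))
      = (\<Prod>j\<in>{Inl i, Inr (Inl i)}. expectation (\<lambda>\<omega>. ?h j (?Z j \<omega>)))"
    by (intro indep_vars_lebesgue_integral) auto
  then show ?thesis
    using expectation_sign[OF assms] by (simp add: mult.commute)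
qed

lemma prob_abs_block_sum_gt_le:
  fixes f :: "real \<times> real \<Rightarrow> real"
  assumes f: "f \<in> borel_measurable (borel \<Otimes>\<^sub>M borel)"
    and centered: "\<And>i L. i \<in> {1..n} \<Longrightarrow> expectation (\<lambda>\<omega>. truncate_at L (f (X i \<omega>, \<alpha> i \<omega>))) = 0"
    and same_abs: "\<And>i. i \<in> {1..n} \<Longrightarrow> AE \<omega> in M. \<bar>f (X i \<omega>, \<alpha> i \<omega>)\<bar> = \<bar>X i \<omega> - \<mu>\<bar>"
    and l: "l \<in> {1..k}"
  shows "prob {\<omega>\<in>space M. card (block n k l) * radius < \<bar>\<Sum>i\<in>block n k l. f (X i \<omega>, \<alpha> i \<omega>)\<bar>}
    \<le> 1 / 6"
proof (rule prob_abs_sum_gt_mom_radius_le)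
  have "0 < n div k" using k by (simp add: div_greater_zero_iff)
  then show "1 \<le> real (n div k)" by linarith
  show "real (n div k) \<le> card (block n k l)" using card_block_ge[OF l] by simp
  show "indep_vars (\<lambda>_. borel) (\<lambda>i \<omega>. truncate_at L (f (X i \<omega>, \<alpha> i \<omega>))) (block n k l)" for L
    using measurable_compose[OF f borel_measurable_truncate_at] block_subset
    by (rule indep_vars_observations)
next
  fix i assume "i \<in> block n k l"
  then have i: "i \<in> {1..n}" using block_subset by blast
  show meas: "(\<lambda>\<omega>. f (X i \<omega>, \<alpha> i \<omega>)) \<in> borel_measurable M"
    by (rule observation_measurable[OF i f])
  show "expectation (\<lambda>\<omega>. truncate_at L (f (X i \<omega>, \<alpha> i \<omega>))) = 0" for L
    by (rule centered[OF i])
  have AE_eq: "AE \<omega> in M. \<bar>f (X i \<omega>, \<alpha> i \<omega>)\<bar> powr (1 + a) = \<bar>X i \<omega> - \<mu>\<bar> powr (1 + a)"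
    using same_abs[OF i] by eventually_elim simp
  have pow: "(\<lambda>x. \<bar>x\<bar> powr (1 + a)) \<in> borel_measurable borel"
    by measurable
  have dev: "(\<lambda>\<omega>. X i \<omega> - \<mu>) \<in> borel_measurable M"
    using X_measurable[OF i] by (rule borel_measurable_diff) simp
  note cong = measurable_compose[OF meas pow] measurable_compose[OF dev pow] AE_eq
  show "integrable M (\<lambda>\<omega>. \<bar>f (X i \<omega>, \<alpha> i \<omega>)\<bar> powr (1 + a))"
    using moment_deviation(1)[OF i] integrable_cong_AE[OF cong] by simp
  show "expectation (\<lambda>\<omega>. \<bar>f (X i \<omega>, \<alpha> i \<omega>)\<bar> powr (1 + a)) \<le> Mm"
    using moment_deviation(2)[OF i] integral_cong_AE[OF cong] by simp
qed (use a in \<open>simp_all add: finite_block\<close>)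

lemma prob_block_sum_high_le:
  assumes "l \<in> {1..k}"
  shows "prob {\<omega>\<in>space M. card (block n k l) * radius < (\<Sum>i\<in>block n k l. X i \<omega> - \<mu>)} \<le> 1 / 6"
proof -
  have f: "(\<lambda>z. fst z - \<mu>) \<in> borel_measurable (borel \<Otimes>\<^sub>M borel)"
    by measurable
  have [measurable]: "(\<lambda>\<omega>. \<Sum>i\<in>block n k l. X i \<omega> - \<mu>) \<in> borel_measurable M"
    using block_sum_measurable[OF f] by simp
  have "prob {\<omega>\<in>space M. card (block n k l) * radius < (\<Sum>i\<in>block n k l. X i \<omega> - \<mu>)}
      \<le> prob {\<omega>\<in>space M. card (block n k l) * radius < \<bar>\<Sum>i\<in>block n k l. X i \<omega> - \<mu>\<bar>}"
    by (rule finite_measure_mono) (force, measurable)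
  also have "\<dots> \<le> 1 / 6"
    using prob_abs_block_sum_gt_le[OF f _ _ assms] by (simp add: expectation_truncate_deviation)
  finally show ?thesis .
qed

lemma prob_block_sum_low_le:
  assumes "l \<in> {1..k}"
  shows "prob {\<omega>\<in>space M. (\<Sum>i\<in>block n k l. \<alpha> i \<omega> * (X i \<omega> - \<mu>)) < - (card (block n k l) * radius)}
    \<le> 1 / 6"
proof -
  have f: "(\<lambda>z. snd z * (fst z - \<mu>)) \<in> borel_measurable (borel \<Otimes>\<^sub>M borel)"
    by measurable
  have [measurable]: "(\<lambda>\<omega>. \<Sum>i\<in>block n k l. \<alpha> i \<omega> * (X i \<omega> - \<mu>)) \<in> borel_measurable M"
    using block_sum_measurable[OF f] by simp
  have "prob {\<omega>\<in>space M. (\<Sum>i\<in>block n k l. \<alpha> i \<omega> * (X i \<omega> - \<mu>)) < - (card (block n k l) * radius)}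
      \<le> prob {\<omega>\<in>space M. card (block n k l) * radius < \<bar>\<Sum>i\<in>block n k l. \<alpha> i \<omega> * (X i \<omega> - \<mu>)\<bar>}"
    by (rule finite_measure_mono) (auto simp: abs_if, measurable)
  also have "\<dots> \<le> 1 / 6"
  proof -
    have "expectation (\<lambda>\<omega>. truncate_at L (\<alpha> i \<omega> * (X i \<omega> - \<mu>))) = 0" if i: "i \<in> {1..n}" for i L
    proof -
      have AE_eq: "AE \<omega> in M.
          truncate_at L (\<alpha> i \<omega> * (X i \<omega> - \<mu>)) = \<alpha> i \<omega> * truncate_at L (X i \<omega> - \<mu>)"
        using sign_AE[OF i] by eventually_elim (rule truncate_at_sign_mult)
      have "expectation (\<lambda>\<omega>. truncate_at L (\<alpha> i \<omega> * (X i \<omega> - \<mu>)))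
          = expectation (\<lambda>\<omega>. \<alpha> i \<omega> * truncate_at L (X i \<omega> - \<mu>))"
      proof (rule integral_cong_AE[OF _ _ AE_eq])
        show "(\<lambda>\<omega>. truncate_at L (\<alpha> i \<omega> * (X i \<omega> - \<mu>))) \<in> borel_measurable M"
          using measurable_compose[OF observation_measurable[OF i f] borel_measurable_truncate_at] by simp
        have "(\<lambda>\<omega>. X i \<omega> - \<mu>) \<in> borel_measurable M"
          using X_measurable[OF i] by simp
        from measurable_compose[OF this borel_measurable_truncate_at]
        show "(\<lambda>\<omega>. \<alpha> i \<omega> * truncate_at L (X i \<omega> - \<mu>)) \<in> borel_measurable M"
          using sign_measurable[OF i] by simp
      qed
      then show ?thesis using expectation_sign_times_truncate[OF i] by simp
    qed
    moreover have "AE \<omega> in M. \<bar>\<alpha> i \<omega> * (X i \<omega> - \<mu>)\<bar> = \<bar>X i \<omega> - \<mu>\<bar>" if "i \<in> {1..n}" for i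
      using sign_AE[OF that] by eventually_elim auto
    ultimately show ?thesis
      using prob_abs_block_sum_gt_le[OF f _ _ assms] by simp
  qed
  finally show ?thesis .
qed

lemma prob_many_high_blocks_le:
  "prob {\<omega>\<in>space M. k \<le> 2 * card {l\<in>{1..k}. card (block n k l) * radius < (\<Sum>i\<in>block n k l. X i \<omega> - \<mu>)}}
    \<le> exp (- real k / 8)"
proof -
  have f: "(\<lambda>z. fst z - \<mu>) \<in> borel_measurable (borel \<Otimes>\<^sub>M borel)"
    by measurable
  have "indep_vars (\<lambda>_. borel) (\<lambda>l \<omega>. (\<lambda>v. of_bool (card (block n k l) * radius < v) :: real)
      (\<Sum>i\<in>block n k l. (\<lambda>z. fst z - \<mu>) (X i \<omega>, \<alpha> i \<omega>))) {1..k}"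
    by (rule indep_vars_block_sums[OF f _ block_subset disjoint_family_on_block]) measurable
  moreover have "{\<omega>\<in>space M. card (block n k l) * radius < (\<Sum>i\<in>block n k l. X i \<omega> - \<mu>)} \<in> events" for l
    using block_sum_measurable[OF f, of l, simplified] by measurable
  ultimately have "prob {\<omega>\<in>space M. card {1..k} \<le> 2 * card {l\<in>{1..k}.
      card (block n k l) * radius < (\<Sum>i\<in>block n k l. X i \<omega> - \<mu>)}} \<le> exp (- real (card {1..k}) / 8)"
    using k prob_block_sum_high_le by (intro prob_half_of_indep_events_le) simp_all
  then show ?thesis by simp
qed

lemma prob_many_low_blocks_le:
  "prob {\<omega>\<in>space M. k \<le> 2 * card {l\<in>{1..k}.
      (\<Sum>i\<in>block n k l. \<alpha> i \<omega> * (X i \<omega> - \<mu>)) < - (card (block n k l) * radius)}}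
    \<le> exp (- real k / 8)"
proof -
  have f: "(\<lambda>z. snd z * (fst z - \<mu>)) \<in> borel_measurable (borel \<Otimes>\<^sub>M borel)"
    by measurable
  have "indep_vars (\<lambda>_. borel) (\<lambda>l \<omega>. (\<lambda>v. of_bool (v < - (card (block n k l) * radius)) :: real)
      (\<Sum>i\<in>block n k l. (\<lambda>z. snd z * (fst z - \<mu>)) (X i \<omega>, \<alpha> i \<omega>))) {1..k}"
    by (rule indep_vars_block_sums[OF f _ block_subset disjoint_family_on_block]) measurable
  moreover have "{\<omega>\<in>space M. (\<Sum>i\<in>block n k l. \<alpha> i \<omega> * (X i \<omega> - \<mu>)) < - (card (block n k l) * radius)}
      \<in> events" for l
    using block_sum_measurable[OF f, of l, simplified] by measurable
  ultimately have "prob {\<omega>\<in>space M. card {1..k} \<le> 2 * card {l\<in>{1..k}.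
      (\<Sum>i\<in>block n k l. \<alpha> i \<omega> * (X i \<omega> - \<mu>)) < - (card (block n k l) * radius)}}
      \<le> exp (- real (card {1..k}) / 8)"
    using k prob_block_sum_low_le by (intro prob_half_of_indep_events_le) simp_all
  then show ?thesis by simp
qed

lemma prob_unbalanced_signs_le:
  "prob (\<Union>l\<in>{1..k}. {\<omega>\<in>space M. card (block n k l) / 2 \<le> (\<Sum>i\<in>block n k l. \<alpha> i \<omega>)})
    \<le> k * exp (- real (n div k) / 8)"
proof -
  have events: "{\<omega>\<in>space M. card (block n k l) / 2 \<le> (\<Sum>i\<in>block n k l. \<alpha> i \<omega>)} \<in> events" for l
    using block_sum_measurable[OF measurable_snd, of l, simplified] by measurable
  have "prob (\<Union>l\<in>{1..k}. {\<omega>\<in>space M. card (block n k l) / 2 \<le> (\<Sum>i\<in>block n k l. \<alpha> i \<omega>)})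
      \<le> (\<Sum>l\<in>{1..k}. prob {\<omega>\<in>space M. card (block n k l) / 2 \<le> (\<Sum>i\<in>block n k l. \<alpha> i \<omega>)})"
    using events by (intro measure_UNION_le) auto
  also have "\<dots> \<le> (\<Sum>l\<in>{1..k}. exp (- real (n div k) / 8))"
  proof (rule sum_mono)
    fix l assume l: "l \<in> {1..k}"
    have in_range: "i \<in> {1..n}" if "i \<in> block n k l" for i
      using block_subset that by blast
    have "indep_vars (\<lambda>_. borel) (\<lambda>i \<omega>. snd (X i \<omega>, \<alpha> i \<omega>)) (block n k l)"
      by (rule indep_vars_observations[OF measurable_snd block_subset])
    then have indep: "indep_vars (\<lambda>_. borel) \<alpha> (block n k l)"
      by simp
    have bounded: "AE \<omega> in M. \<alpha> i \<omega> \<in> {-1..1}" if "i \<in> block n k l" for i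
      using sign_AE[OF in_range[OF that]] by eventually_elim auto
    have "prob {\<omega>\<in>space M. card (block n k l) / 2 \<le> (\<Sum>i\<in>block n k l. \<alpha> i \<omega>)}
        \<le> exp (- real (card (block n k l)) / 8)"
      using prob_sum_signs_ge_half_le[OF finite_block card_block_pos[OF k l] indep bounded
          expectation_sign[OF in_range]] .
    also have "\<dots> \<le> exp (- real (n div k) / 8)"
      using card_block_ge[OF l] by simp
    finally show "prob {\<omega>\<in>space M. card (block n k l) / 2 \<le> (\<Sum>i\<in>block n k l. \<alpha> i \<omega>)}
        \<le> exp (- real (n div k) / 8)" .
  qed
  finally show ?thesis by simp
qed

lemma bad_blocks_if_rmom_U_gt:
  assumes "ereal (\<mu> + 4 * radius) < rmom_U n k (\<lambda>i. X i \<omega>) (\<lambda>i. \<alpha> i \<omega>) (p \<omega>)"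
  shows "k \<le> 2 * card {l\<in>{1..k}. card (block n k l) * radius < (\<Sum>i\<in>block n k l. X i \<omega> - \<mu>)}
    \<or> k \<le> 2 * card {l\<in>{1..k}.
        (\<Sum>i\<in>block n k l. \<alpha> i \<omega> * (X i \<omega> - \<mu>)) < - (card (block n k l) * radius)}
    \<or> (\<exists>l\<in>{1..k}. card (block n k l) / 2 \<le> (\<Sum>i\<in>block n k l. \<alpha> i \<omega>))"
proof (rule ccontr)
  assume "\<not> ?thesis"
  then have "rmom_U n k (\<lambda>i. X i \<omega>) (\<lambda>i. \<alpha> i \<omega>) (p \<omega>) \<le> ereal (\<mu> + 4 * radius)"
    by (intro rmom_U_le k mom_radius_nonneg) (auto simp: not_le)
  with assms show False by simp
qed

lemma outer_prob_rmom_U_gt_le: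
  "outer_prob M {\<omega>\<in>space M. ereal (\<mu> + 4 * radius) < rmom_U n k (\<lambda>i. X i \<omega>) (\<lambda>i. \<alpha> i \<omega>) (p \<omega>)}
    \<le> k * exp (- real (n div k) / 8) + 2 * exp (- real k / 8)"
proof -
  define A1 where "A1 = {\<omega>\<in>space M.
    k \<le> 2 * card {l\<in>{1..k}. card (block n k l) * radius < (\<Sum>i\<in>block n k l. X i \<omega> - \<mu>)}}"
  define A2 where "A2 = {\<omega>\<in>space M. k \<le> 2 * card {l\<in>{1..k}.
    (\<Sum>i\<in>block n k l. \<alpha> i \<omega> * (X i \<omega> - \<mu>)) < - (card (block n k l) * radius)}}"
  define A3 where
    "A3 = (\<Union>l\<in>{1..k}. {\<omega>\<in>space M. card (block n k l) / 2 \<le> (\<Sum>i\<in>block n k l. \<alpha> i \<omega>)})"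
  have "(\<lambda>\<omega>. \<Sum>i\<in>block n k l. X i \<omega> - \<mu>) \<in> borel_measurable M"
      "(\<lambda>\<omega>. \<Sum>i\<in>block n k l. \<alpha> i \<omega> * (X i \<omega> - \<mu>)) \<in> borel_measurable M"
      "(\<lambda>\<omega>. \<Sum>i\<in>block n k l. \<alpha> i \<omega>) \<in> borel_measurable M" for l
    using block_sum_measurable[of "\<lambda>z. fst z - \<mu>" l] block_sum_measurable[of "\<lambda>z. snd z * (fst z - \<mu>)" l]
      block_sum_measurable[OF measurable_snd, of l] by simp_all
  then have events: "A1 \<in> events" "A2 \<in> events" "A3 \<in> events"
    unfolding A1_def A2_def A3_def by (intro sets_Collect_card_ge sets.finite_UN; measurable)+
  have "{\<omega>\<in>space M. ereal (\<mu> + 4 * radius) < rmom_U n k (\<lambda>i. X i \<omega>) (\<lambda>i. \<alpha> i \<omega>) (p \<omega>)} \<inter> space M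
      \<subseteq> A1 \<union> A2 \<union> A3"
    unfolding A1_def A2_def A3_def using bad_blocks_if_rmom_U_gt by blast
  then have "outer_prob M {\<omega>\<in>space M. ereal (\<mu> + 4 * radius) < rmom_U n k (\<lambda>i. X i \<omega>) (\<lambda>i. \<alpha> i \<omega>) (p \<omega>)}
      \<le> prob (A1 \<union> A2 \<union> A3)"
    using events by (intro outer_prob_le_measure) auto
  also have "\<dots> \<le> prob A1 + prob A2 + prob A3"
    using events by (meson add_right_mono order_trans measure_Un_le sets.Un)
  also have "\<dots> \<le> exp (- real k / 8) + exp (- real k / 8) + k * exp (- real (n div k) / 8)"
    unfolding A1_def A2_def A3_def
    using prob_many_high_blocks_le prob_many_low_blocks_le prob_unbalanced_signs_le
    by (intro add_mono)
  finally show ?thesis by simp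
qed

end

lemma ereal_less_diff_ereal_iff: "ereal t < U - ereal m \<longleftrightarrow> ereal (m + t) < U"
  by (simp add: ereal_less_minus add.commute)

theorem theorem6:
  fixes M :: "'a measure" and X \<alpha> :: "nat \<Rightarrow> 'a \<Rightarrow> real" and p :: "'a \<Rightarrow> bool"
    and n k :: nat and \<mu> a Mm :: real
  assumes "prob_space M"
    and indep: "prob_space.indep_vars M (\<lambda>_. borel)
           (\<lambda>j \<omega>. case j of Inl i \<Rightarrow> X i \<omega> | Inr (Inl i) \<Rightarrow> \<alpha> i \<omega> | Inr (Inr u) \<Rightarrow> of_bool (p \<omega>))
           (Inl ` {1..n} \<union> Inr ` Inl ` {1..n} \<union> {Inr (Inr ())})"
    and ident: "\<And>i. i \<in> {1..n} \<Longrightarrow> distr M borel (X i) = distr M borel (X 1)"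
    and symm: "distr M borel (\<lambda>\<omega>. X 1 \<omega> - \<mu>) = distr M borel (\<lambda>\<omega>. \<mu> - X 1 \<omega>)"
    and a: "0 < a" "a \<le> 1"
    and int1: "integrable M (X 1)"
    and intm: "integrable M (\<lambda>\<omega>. \<bar>X 1 \<omega> - prob_space.expectation M (X 1)\<bar> powr (1 + a))"
    and mom: "prob_space.expectation M (\<lambda>\<omega>. \<bar>X 1 \<omega> - prob_space.expectation M (X 1)\<bar> powr (1 + a)) = Mm"
    and rad: "\<And>i. i \<in> {1..n} \<Longrightarrow> measure M {\<omega> \<in> space M. \<alpha> i \<omega> = 1} = 1/2"
    and rad': "\<And>i. i \<in> {1..n} \<Longrightarrow> measure M {\<omega> \<in> space M. \<alpha> i \<omega> = -1} = 1/2"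
    and pi: "measure M {\<omega> \<in> space M. p \<omega>} = 1/2"
    and k: "1 \<le> k" "k \<le> n"
  shows "outer_prob M {\<omega> \<in> space M.
           rmom_U n k (\<lambda>i. X i \<omega>) (\<lambda>i. \<alpha> i \<omega>) (p \<omega>) - ereal \<mu>
             > ereal (4 * (12 * Mm) powr (1 / (1 + a)) * (1 / real (n div k)) powr (a / (1 + a)))}
         \<le> 2 * real k * exp (- real (n div k) / 8) + 2 * exp (- real k / 8)"
proof -
  interpret rmom_setting M X \<alpha> p n k \<mu> a Mm
    by (intro rmom_setting.intro rmom_setting_axioms.intro assms)
  have "4 * (12 * Mm) powr (1 / (1 + a)) * (1 / real (n div k)) powr (a / (1 + a)) = 4 * radius"
    by (simp add: mom_radius_def)
  then have "outer_prob M {\<omega> \<in> space M.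
           rmom_U n k (\<lambda>i. X i \<omega>) (\<lambda>i. \<alpha> i \<omega>) (p \<omega>) - ereal \<mu>
             > ereal (4 * (12 * Mm) powr (1 / (1 + a)) * (1 / real (n div k)) powr (a / (1 + a)))}
      \<le> k * exp (- real (n div k) / 8) + 2 * exp (- real k / 8)"
    using outer_prob_rmom_U_gt_le by (simp add: ereal_less_diff_ereal_iff mult.assoc)
  also have "\<dots> \<le> 2 * real k * exp (- real (n div k) / 8) + 2 * exp (- real k / 8)"
    by simp
  finally show ?thesis .
qed

end
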